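(* Consider the two-dimensional regular lattice with the Gaussian testing problem (see context) and the uniform prior $\pi$ on $\mathcal{P}_m$. Let $B_m(\pi)=\inf_{T_m}\big[\mathbf{P}_0(T_m=1)+\mathbf{E}_\pi\mathbf{P}_{1,p}(T_m=0)\big]$ be the Bayes risk (the infimum over all tests, attained by the likelihood-ratio test rejecting iff $L_m\ge1$, where $L_m(X)=2^{-(m-1)}\sum_{p\in\mathcal{P}_m}e^{\mu_m X_p-m\mu_m^2/2}$ and $X_p=\sum_{v\in p}X_v$). (i) If $\mu_m m^{1/4}\to\infty$, then $B_m(\pi)\to0$ (the Bayes test is asymptotically powerful). (ii) If $\mu_m m^{1/4}\to0$, then $\liminf_{m\to\infty}B_m(\pi)\ge1$ (every sequence of tests is asymptotically powerless for the Bayes risk).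
   Context: Regular lattice: $V_m=\{(i,j)\in\mathbb{Z}^2: 0\le i\le m-1,\ -i\le j\le i,\ j\equiv i \pmod 2\}$, with oriented edges $(i,j)\to(i+1,j\pm1)$. $\mathcal{P}_m$ is the set of paths starting at the origin $(0,0)$ visiting $m$ vertices: $(0,p_0),\dots,(m-1,p_{m-1})$ with $p_0=0$, $|p_{i+1}-p_i|=1$; $|\mathcal{P}_m|=2^{m-1}$. Under $H_0$ (law $\mathbf{P}_0$) the $X_v$ are i.i.d. $N(0,1)$; under $H_{1,m}$ with path $p$ (law $\mathbf{P}_{1,p}$) the $X_v$ are independent with $X_v\sim N(\mu_m,1)$ on $p$ and $N(0,1)$ off $p$, $\mu_m>0$. $\pi$ is the uniform distribution on $\mathcal{P}_m$ and $\mathbf{E}_\pi$ denotes averaging over $p\sim\pi$. A test is a measurable $\{0,1\}$-valued function of $(X_v)$. *)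

theory Defs
  imports "HOL-Probability.Probability"
begin

definition lattice_V :: "nat \<Rightarrow> (int \<times> int) set" where
  "lattice_V m = {(i, j). 0 \<le> i \<and> i \<le> int m - 1 \<and> - i \<le> j \<and> j \<le> i \<and> j mod 2 = i mod 2}"

text \<open>Paths from the origin visiting m vertices, encoded by the list of heights p_0, ..., p_(m-1).\<close>
definition paths :: "nat \<Rightarrow> int list set" where
  "paths m = {ps. length ps = m \<and> ps ! 0 = 0 \<and>
                 (\<forall>i. i + 1 < m \<longrightarrow> \<bar>ps ! (i + 1) - ps ! i\<bar> = 1)}"

definition path_vertices :: "int list \<Rightarrow> (int \<times> int) set" where
  "path_vertices ps = {(int i, ps ! i) | i. i < length ps}"

definition gauss :: "real \<Rightarrow> real measure" where
  "gauss a = density lborel (normal_density a 1)"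

definition P0 :: "nat \<Rightarrow> ((int \<times> int) \<Rightarrow> real) measure" where
  "P0 m = PiM (lattice_V m) (\<lambda>_. gauss 0)"

definition P1 :: "nat \<Rightarrow> real \<Rightarrow> int list \<Rightarrow> ((int \<times> int) \<Rightarrow> real) measure" where
  "P1 m mu ps = PiM (lattice_V m) (\<lambda>v. if v \<in> path_vertices ps then gauss mu else gauss 0)"

text \<open>Tests: measurable {0,1}-valued (here boolean; True = reject H_0) functions of the observations.\<close>
definition tests :: "nat \<Rightarrow> (((int \<times> int) \<Rightarrow> real) \<Rightarrow> bool) set" where
  "tests m = measurable (PiM (lattice_V m) (\<lambda>_. borel)) (count_space UNIV)"

definition bayes_risk_of :: "nat \<Rightarrow> real \<Rightarrow> (((int \<times> int) \<Rightarrow> real) \<Rightarrow> bool) \<Rightarrow> real" where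
  "bayes_risk_of m mu T =
     measure (P0 m) {x \<in> space (P0 m). T x}
     + (1 / real (card (paths m))) *
       (\<Sum>ps\<in>paths m. measure (P1 m mu ps) {x \<in> space (P1 m mu ps). \<not> T x})"

definition bayes_risk :: "nat \<Rightarrow> real \<Rightarrow> real" where
  "bayes_risk m mu = (INF T \<in> tests m. bayes_risk_of m mu T)"

end

theory Submission
  imports Defs
begin

text \<open>
  For a test with rejection region \<open>A\<close> the Bayes risk equals
  \<open>1 - E\<^sub>0[(L\<^sub>m - 1) 1\<^sub>A]\<close>, which by Cauchy-Schwarz is at least \<open>1 - sqrt (E\<^sub>0[L\<^sub>m\<^sup>2] - 1)\<close>.
  Expanding the square, \<open>E\<^sub>0[L\<^sub>m\<^sup>2]\<close> is the mean of \<open>exp (mu\<^sup>2 |p \<inter> q|)\<close> over pairs of paths.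
  The offset \<open>q\<^sub>i - p\<^sub>i\<close> of two independent uniform paths is a lazy random walk, and a
  first-step induction bounds this mean by \<open>1 / (1 - (exp (mu\<^sup>2) - 1) G)\<close>, where \<open>G \<le> 2 sqrt m\<close>
  is the expected number of visits of the walk to \<open>0\<close>. Hence \<open>E\<^sub>0[L\<^sub>m\<^sup>2] - 1\<close> is at most
  \<open>8 z\<^sup>2\<close> for \<open>z = mu m powr (1/4)\<close> small.

  Reject when the sum of the observations in the band \<open>|j| \<le> k\<close>, with
  \<open>k \<approx> C sqrt m\<close>, is large. By Chebyshev, the type I error and the type II error for every path
  that spends half of its time in the band are \<open>O(k / (mu\<^sup>2 m)) = O(C / z\<^sup>2)\<close>. Since the mean
  of \<open>p\<^sub>i\<^sup>2\<close> over paths is \<open>i\<close>, only a fraction \<open>O(1 / C\<^sup>2)\<close> of the paths spend more than half of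
  their time outside the band.
\<close>

section \<open>Exponential tilting of Gaussian product measures\<close>

lemma normal_density_tilt:
  "normal_density 0 1 y * exp (a * y - a\<^sup>2 / 2) = normal_density a 1 y"
proof -
  have "- ((y - 0)\<^sup>2) / (2 * 1\<^sup>2) + (a * y - a\<^sup>2 / 2) = - ((y - a)\<^sup>2) / (2 * 1\<^sup>2)"
    by (simp add: power2_eq_square field_simps)
  then have "exp (- ((y - 0)\<^sup>2) / (2 * 1\<^sup>2)) * exp (a * y - a\<^sup>2 / 2) = exp (- ((y - a)\<^sup>2) / (2 * 1\<^sup>2))"
    by (simp only: exp_add[symmetric])
  then show ?thesis
    unfolding normal_density_def by (simp only: mult.assoc)
qed

lemma prob_space_gauss [simp]: "prob_space (gauss a)"
  unfolding gauss_def by (rule prob_space_normal_density) simp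

lemma sets_gauss [simp, measurable_cong]: "sets (gauss a) = sets borel"
  unfolding gauss_def by simp

lemma space_gauss [simp]: "space (gauss a) = UNIV"
  unfolding gauss_def by simp

lemma integrable_gauss_tilt: "integrable (gauss 0) (\<lambda>y. exp (a * y - a\<^sup>2 / 2))"
  unfolding gauss_def by (subst integrable_density) (simp_all add: normal_density_tilt)

lemma integral_gauss_tilt: "(\<integral>y. exp (a * y - a\<^sup>2 / 2) \<partial>gauss 0) = 1"
  unfolding gauss_def by (subst integral_density) (simp_all add: normal_density_tilt)

lemma emeasure_gauss_tilt:
  assumes "A \<in> sets borel"
  shows "emeasure (gauss a) A = (\<integral>\<^sup>+ y. ennreal (exp (a * y - a\<^sup>2 / 2)) * indicator A y \<partial>gauss 0)"
proof -
  have "emeasure (gauss a) A = (\<integral>\<^sup>+ y. ennreal (normal_density a 1 y) * indicator A y \<partial>lborel)"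
    unfolding gauss_def using assms by (intro emeasure_density) auto
  also have "\<dots> = (\<integral>\<^sup>+ y. ennreal (normal_density 0 1 y) *
                      (ennreal (exp (a * y - a\<^sup>2 / 2)) * indicator A y) \<partial>lborel)"
    by (intro nn_integral_cong, subst normal_density_tilt[symmetric])
       (simp only: ennreal_mult exp_ge_zero normal_density_nonneg mult.assoc)
  also have "\<dots> = (\<integral>\<^sup>+ y. ennreal (exp (a * y - a\<^sup>2 / 2)) * indicator A y \<partial>gauss 0)"
    unfolding gauss_def using assms by (intro nn_integral_density[symmetric]) auto
  finally show ?thesis .
qed

lemma gauss_mean:
  "integrable (gauss a) (\<lambda>y. y - a)" "(\<integral>y. y - a \<partial>gauss a) = 0"
proof -
  have "integrable lborel (\<lambda>y. normal_density a 1 y * (y - a) ^ 1)"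
    by (rule integrable_normal_moment) simp
  then show "integrable (gauss a) (\<lambda>y. y - a)"
    unfolding gauss_def by (subst integrable_density) simp_all
  have "(\<integral>y. normal_density a 1 y * (y - a) ^ (2 * 0 + 1) \<partial>lborel) = 0"
    by (rule integral_normal_moment_odd) simp
  then show "(\<integral>y. y - a \<partial>gauss a) = 0"
    unfolding gauss_def by (subst integral_density) simp_all
qed

lemma gauss_variance:
  "integrable (gauss a) (\<lambda>y. (y - a)\<^sup>2)" "(\<integral>y. (y - a)\<^sup>2 \<partial>gauss a) = 1"
proof -
  have "integrable lborel (\<lambda>y. normal_density a 1 y * (y - a)\<^sup>2)"
    by (rule integrable_normal_moment) simp
  then show "integrable (gauss a) (\<lambda>y. (y - a)\<^sup>2)"
    unfolding gauss_def by (subst integrable_density) simp_all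
  have "(\<integral>y. normal_density a 1 y * (y - a) ^ (2 * 1) \<partial>lborel) = fact (2 * 1) / ((2 / 1\<^sup>2) ^ 1 * fact 1)"
    by (rule integral_normal_moment_even) simp
  then show "(\<integral>y. (y - a)\<^sup>2 \<partial>gauss a) = 1"
    unfolding gauss_def by (subst integral_density) (simp_all add: power2_eq_square)
qed

lemma product_prob_space_gauss: "product_prob_space (\<lambda>i. gauss (a i))"
  by (rule product_prob_spaceI) simp

lemma prob_space_PiM_gauss: "prob_space (PiM I (\<lambda>i. gauss (a i)))"
proof -
  interpret product_prob_space "\<lambda>i. gauss (a i)" I
    by (rule product_prob_space_gauss)
  show ?thesis by unfold_locales
qed

definition gauss_lr :: "'i set \<Rightarrow> ('i \<Rightarrow> real) \<Rightarrow> ('i \<Rightarrow> real) \<Rightarrow> real" where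
  "gauss_lr I a x = (\<Prod>i\<in>I. exp (a i * x i - (a i)\<^sup>2 / 2))"

lemma gauss_lr_nonneg: "0 \<le> gauss_lr I a x"
  unfolding gauss_lr_def by (intro prod_nonneg) simp

lemma borel_measurable_gauss_lr [measurable]:
  "finite I \<Longrightarrow> gauss_lr I a \<in> borel_measurable (PiM I (\<lambda>_. gauss 0))"
  unfolding gauss_lr_def by measurable

lemma indicator_PiE_eq_prod:
  assumes "finite I" and "x \<in> extensional I"
  shows "indicator (Pi\<^sub>E I A) x = (\<Prod>i\<in>I. indicator (A i) (x i) :: 'a :: comm_semiring_1)"
proof (cases "\<forall>i\<in>I. x i \<in> A i")
  case True
  then show ?thesis using assms(2) by (simp add: PiE_def)
next
  case False
  then obtain k where k: "k \<in> I" "x k \<notin> A k" by blast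
  then have "x \<notin> Pi\<^sub>E I A" by auto
  moreover have "(\<Prod>i\<in>I. indicator (A i) (x i) :: 'a) = 0"
    using assms(1) k by (intro prod_zero bexI[of _ k]) simp_all
  ultimately show ?thesis by simp
qed

lemma density_gauss_lr:
  assumes I: "finite I"
  shows "density (PiM I (\<lambda>_. gauss 0)) (gauss_lr I a) = PiM I (\<lambda>i. gauss (a i))"
proof -
  interpret product_prob_space "\<lambda>i. gauss (a i)" I
    by (rule product_prob_space_gauss)
  interpret Z: product_prob_space "\<lambda>i. gauss 0" I
    using product_prob_space_gauss[of "\<lambda>_. 0"] by simp
  show ?thesis
  proof (rule PiM_eqI[OF I])
    show "sets (density (PiM I (\<lambda>_. gauss 0)) (gauss_lr I a)) = sets (PiM I (\<lambda>i. gauss (a i)))"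
      unfolding sets_density by (rule sets_PiM_cong) simp_all
  next
    fix A assume A: "\<And>i. i \<in> I \<Longrightarrow> A i \<in> sets (gauss (a i))"
    have indicator_PiE: "indicator (Pi\<^sub>E I A) x = (\<Prod>i\<in>I. indicator (A i) (x i) :: ennreal)"
      if "x \<in> space (PiM I (\<lambda>_. gauss 0))" for x
      using that I by (intro indicator_PiE_eq_prod) (simp_all add: space_PiM PiE_iff)
    have PiE_A: "Pi\<^sub>E I A \<in> sets (PiM I (\<lambda>_. gauss 0))"
      using A by (intro sets_PiM_I_finite I) simp
    have "emeasure (density (PiM I (\<lambda>_. gauss 0)) (gauss_lr I a)) (Pi\<^sub>E I A)
        = (\<integral>\<^sup>+ x. ennreal (gauss_lr I a x) * indicator (Pi\<^sub>E I A) x \<partial>PiM I (\<lambda>_. gauss 0))"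
      using I PiE_A by (intro emeasure_density) simp_all
    also have "\<dots> = (\<integral>\<^sup>+ x. (\<Prod>i\<in>I. ennreal (exp (a i * x i - (a i)\<^sup>2 / 2)) * indicator (A i) (x i))
                          \<partial>PiM I (\<lambda>_. gauss 0))"
      unfolding gauss_lr_def
      by (intro nn_integral_cong, subst prod_ennreal[symmetric]) (simp_all add: indicator_PiE prod.distrib)
    also have "\<dots> = (\<Prod>i\<in>I. \<integral>\<^sup>+ y. ennreal (exp (a i * y - (a i)\<^sup>2 / 2)) * indicator (A i) y \<partial>gauss 0)"
      using A by (intro Z.product_nn_integral_prod[OF I]) simp
    also have "\<dots> = (\<Prod>i\<in>I. emeasure (gauss (a i)) (A i))"
      using A by (intro prod.cong refl emeasure_gauss_tilt[symmetric]) simp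
    finally show "emeasure (density (PiM I (\<lambda>_. gauss 0)) (gauss_lr I a)) (Pi\<^sub>E I A)
        = (\<Prod>i\<in>I. emeasure (gauss (a i)) (A i))" .
  qed
qed

lemma gauss_lr_integral:
  assumes I: "finite I"
  shows "integrable (PiM I (\<lambda>_. gauss 0)) (gauss_lr I a)"
    and "(\<integral>x. gauss_lr I a x \<partial>PiM I (\<lambda>_. gauss 0)) = 1"
proof -
  interpret product_prob_space "\<lambda>i. gauss 0" I
    using product_prob_space_gauss[of "\<lambda>_. 0"] by simp
  have lr: "gauss_lr I a = (\<lambda>x. \<Prod>i\<in>I. (\<lambda>i y. exp (a i * y - (a i)\<^sup>2 / 2)) i (x i))"
    unfolding gauss_lr_def by simp
  show "integrable (PiM I (\<lambda>_. gauss 0)) (gauss_lr I a)"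
    unfolding lr by (rule product_integrable_prod[OF I]) (rule integrable_gauss_tilt)
  show "(\<integral>x. gauss_lr I a x \<partial>PiM I (\<lambda>_. gauss 0)) = 1"
    unfolding lr by (subst product_integral_prod[OF I]) (simp_all add: integrable_gauss_tilt integral_gauss_tilt)
qed

lemma gauss_lr_mult:
  assumes "finite I"
  shows "gauss_lr I a x * gauss_lr I b x = exp (\<Sum>i\<in>I. a i * b i) * gauss_lr I (\<lambda>i. a i + b i) x"
proof -
  have "exp (a i * x i - (a i)\<^sup>2 / 2) * exp (b i * x i - (b i)\<^sup>2 / 2)
      = exp (a i * b i) * exp ((a i + b i) * x i - (a i + b i)\<^sup>2 / 2)" for i
    by (simp add: exp_add[symmetric] power2_eq_square algebra_simps)
  then show ?thesis
    unfolding gauss_lr_def by (simp add: prod.distrib[symmetric] exp_sum[OF assms])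
qed

lemma gauss_lr_mult_integral:
  assumes "finite I"
  shows "integrable (PiM I (\<lambda>_. gauss 0)) (\<lambda>x. gauss_lr I a x * gauss_lr I b x)"
    and "(\<integral>x. gauss_lr I a x * gauss_lr I b x \<partial>PiM I (\<lambda>_. gauss 0)) = exp (\<Sum>i\<in>I. a i * b i)"
  unfolding gauss_lr_mult[OF assms] using gauss_lr_integral[OF assms] by simp_all

lemma PiM_gauss_covariance:
  assumes I: "finite I" and "i \<in> I" "j \<in> I"
  shows "integrable (PiM I (\<lambda>i. gauss (a i))) (\<lambda>x. (x i - a i) * (x j - a j))"
    and "(\<integral>x. (x i - a i) * (x j - a j) \<partial>PiM I (\<lambda>i. gauss (a i))) = of_bool (i = j)"
proof -
  interpret product_prob_space "\<lambda>i. gauss (a i)" I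
    by (rule product_prob_space_gauss)
  define h where "h = (\<lambda>k y. (if k = i then y - a k else 1) * (if k = j then y - a k else 1))"
  have h_integrable: "integrable (gauss (a k)) (h k)" for k
    using gauss_mean(1)[of "a k"] gauss_variance(1)[of "a k"]
    by (cases "k = i"; cases "k = j") (simp_all add: h_def power2_eq_square)
  have h_integral: "integral\<^sup>L (gauss (a k)) (h k) = (if (k = i) \<noteq> (k = j) then 0 else 1)" for k
    using gauss_mean(2)[of "a k"] gauss_variance(2)[of "a k"] prob_space.prob_space[of "gauss (a k)"]
    by (cases "k = i"; cases "k = j") (simp_all add: h_def power2_eq_square)
  have prod_h: "(\<lambda>x. (x i - a i) * (x j - a j)) = (\<lambda>x. \<Prod>k\<in>I. h k (x k))"
    using assms by (simp add: h_def prod.distrib prod.If_cases Int_absorb1 fun_eq_iff)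
  show "integrable (PiM I (\<lambda>i. gauss (a i))) (\<lambda>x. (x i - a i) * (x j - a j))"
    unfolding prod_h by (rule product_integrable_prod[OF I h_integrable])
  show "(\<integral>x. (x i - a i) * (x j - a j) \<partial>PiM I (\<lambda>i. gauss (a i))) = of_bool (i = j)"
    unfolding prod_h product_integral_prod[OF I h_integrable] h_integral
    using assms by (cases "i = j") (auto simp: prod_zero_iff)
qed

lemma PiM_gauss_variance_sum:
  assumes I: "finite I" and J: "J \<subseteq> I"
  shows "integrable (PiM I (\<lambda>i. gauss (a i))) (\<lambda>x. (\<Sum>i\<in>J. x i - a i)\<^sup>2)"
    and "(\<integral>x. (\<Sum>i\<in>J. x i - a i)\<^sup>2 \<partial>PiM I (\<lambda>i. gauss (a i))) = card J"
proof -
  have J_finite: "finite J" using I J by (rule finite_subset[rotated])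
  have square: "(\<Sum>i\<in>J. x i - a i)\<^sup>2 = (\<Sum>i\<in>J. \<Sum>j\<in>J. (x i - a i) * (x j - a j))" for x
    by (simp add: power2_eq_square sum_product)
  show "integrable (PiM I (\<lambda>i. gauss (a i))) (\<lambda>x. (\<Sum>i\<in>J. x i - a i)\<^sup>2)"
    unfolding square using J by (intro Bochner_Integration.integrable_sum PiM_gauss_covariance(1)[OF I]) auto
  have "(\<integral>x. (\<Sum>i\<in>J. x i - a i)\<^sup>2 \<partial>PiM I (\<lambda>i. gauss (a i))) = (\<Sum>i\<in>J. \<Sum>j\<in>J. of_bool (i = j))"
    unfolding square using J
    by (simp add: subset_iff Bochner_Integration.integral_sum Bochner_Integration.integrable_sum
        PiM_gauss_covariance[OF I])
  also have "\<dots> = card J" using J_finite by simp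
  finally show "(\<integral>x. (\<Sum>i\<in>J. x i - a i)\<^sup>2 \<partial>PiM I (\<lambda>i. gauss (a i))) = card J" .
qed

lemma PiM_gauss_sum_deviation:
  assumes I: "finite I" and J: "J \<subseteq> I" and r: "0 < r"
    and deviates: "\<And>x. P x \<Longrightarrow> r \<le> \<bar>(\<Sum>i\<in>J. x i) - (\<Sum>i\<in>J. a i)\<bar>"
  shows "measure (PiM I (\<lambda>i. gauss (a i))) {x \<in> space (PiM I (\<lambda>i. gauss (a i))). P x} \<le> card J / r\<^sup>2"
proof -
  define M where "M = PiM I (\<lambda>i. gauss (a i))"
  interpret prob_space M
    unfolding M_def by (rule prob_space_PiM_gauss)
  define u where "u x = (\<Sum>i\<in>J. x i - a i)\<^sup>2" for x
  have u_integrable: "integrable M u"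
    unfolding u_def M_def by (rule PiM_gauss_variance_sum(1)[OF I J])
  then have [measurable]: "u \<in> borel_measurable M" by (rule borel_measurable_integrable)
  have "{x \<in> space M. P x} \<subseteq> {x \<in> space M. r\<^sup>2 \<le> u x}"
  proof safe
    fix x assume "P x"
    then have "r\<^sup>2 \<le> \<bar>(\<Sum>i\<in>J. x i) - (\<Sum>i\<in>J. a i)\<bar>\<^sup>2"
      using r deviates by (intro power_mono) auto
    then show "r\<^sup>2 \<le> u x" unfolding u_def by (simp add: sum_subtractf)
  qed
  then have "measure M {x \<in> space M. P x} \<le> measure M {x \<in> space M. r\<^sup>2 \<le> u x}"
    by (intro finite_measure_mono) measurable
  also have "\<dots> \<le> (\<integral>x. u x \<partial>M) / r\<^sup>2"
    using r by (intro integral_Markov_inequality_measure[OF u_integrable]) (auto simp: u_def)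
  also have "(\<integral>x. u x \<partial>M) = card J"
    unfolding u_def M_def by (rule PiM_gauss_variance_sum(2)[OF I J])
  finally show ?thesis unfolding M_def .
qed

section \<open>Paths\<close>

definition path_prepend :: "int \<Rightarrow> int list \<Rightarrow> int list" where
  "path_prepend s q = 0 # map (\<lambda>y. y + s) q"

lemma path_prepend_nth [simp]:
  "path_prepend s q ! 0 = 0"
  "i < length q \<Longrightarrow> path_prepend s q ! Suc i = q ! i + s"
  "length (path_prepend s q) = Suc (length q)"
  by (simp_all add: path_prepend_def)

lemma length_paths: "p \<in> paths m \<Longrightarrow> length p = m"
  by (simp add: paths_def)

lemma paths_1: "paths (Suc 0) = {[0]}"
proof -
  have "ps = [0]" if "length ps = Suc 0" "ps ! 0 = 0" for ps :: "int list"
    using that by (cases ps) auto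
  then show ?thesis
    unfolding paths_def by auto
qed

lemma paths_Suc_Suc:
  "paths (Suc (Suc n)) = case_prod path_prepend ` ({1, -1} \<times> paths (Suc n))"
proof (intro set_eqI iffI)
  fix p assume p: "p \<in> paths (Suc (Suc n))"
  then have len: "length p = Suc (Suc n)" and p0: "p ! 0 = 0"
    and step: "\<And>i. i + 1 < Suc (Suc n) \<Longrightarrow> \<bar>p ! (i + 1) - p ! i\<bar> = 1"
    unfolding paths_def by auto
  define s where "s = p ! 1"
  define q where "q = map (\<lambda>y. y - s) (tl p)"
  have s: "s \<in> {1, -1}"
    using step[of 0] p0 unfolding s_def by auto
  have q_nth: "q ! i = p ! Suc i - s" if "i < Suc n" for i
    using that len by (simp add: q_def nth_tl)
  have "q \<in> paths (Suc n)"
    unfolding paths_def using len step p0 by (auto simp: q_def nth_tl s_def)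
  moreover have "p = path_prepend s q"
    using p0 len q_nth by (intro nth_equalityI) (auto simp: q_def less_Suc_eq_0_disj)
  ultimately show "p \<in> case_prod path_prepend ` ({1, -1} \<times> paths (Suc n))"
    using s by force
next
  fix p assume "p \<in> case_prod path_prepend ` ({1, -1} \<times> paths (Suc n))"
  then obtain s q where s: "s \<in> {1, -1}" and q: "q \<in> paths (Suc n)" and p: "p = path_prepend s q"
    by auto
  from q have len: "length q = Suc n" and q0: "q ! 0 = 0"
    and step: "\<And>i. i + 1 < Suc n \<Longrightarrow> \<bar>q ! (i + 1) - q ! i\<bar> = 1"
    unfolding paths_def by auto
  have "\<bar>path_prepend s q ! (i + 1) - path_prepend s q ! i\<bar> = 1" if "i + 1 < Suc (Suc n)" for i
    using s q0 len step[of "i - 1"] that by (cases i) auto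
  then show "p \<in> paths (Suc (Suc n))"
    unfolding paths_def p using len by simp
qed

lemma inj_on_path_prepend: "inj_on (case_prod path_prepend) ({1, -1} \<times> paths (Suc n))"
proof (rule inj_onI)
  fix x y
  assume "x \<in> {1, -1} \<times> paths (Suc n)" "y \<in> {1, -1} \<times> paths (Suc n)"
    and eq: "case_prod path_prepend x = case_prod path_prepend y"
  then obtain s q s' q' where xy: "x = (s, q)" "y = (s', q')"
    and q: "q ! 0 = 0" "length q = Suc n" and q': "q' ! 0 = 0" "length q' = Suc n"
    by (auto simp: paths_def)
  have "path_prepend s q ! Suc 0 = path_prepend s' q' ! Suc 0"
    using eq xy by simp
  then have "s = s'"
    using q q' by simp
  moreover from this have "map (\<lambda>y. y + s) q = map (\<lambda>y. y + s) q'"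
    using eq xy by (simp add: path_prepend_def)
  then have "q = q'"
    by (rule map_injective) simp
  ultimately show "x = y"
    using xy by simp
qed

lemma finite_paths: "finite (paths (Suc n))"
  by (induction n) (simp_all add: paths_1 paths_Suc_Suc)

lemma card_paths: "card (paths (Suc n)) = 2 ^ n"
proof (induction n)
  case (Suc n)
  have "card (paths (Suc (Suc n))) = card ({1::int, -1} \<times> paths (Suc n))"
    unfolding paths_Suc_Suc by (rule card_image[OF inj_on_path_prepend])
  also have "\<dots> = 2 * 2 ^ n"
    using Suc finite_paths[of n] by (simp add: card_cartesian_product)
  finally show ?case by simp
qed (simp add: paths_1)

lemma sum_paths_Suc_Suc:
  "(\<Sum>p\<in>paths (Suc (Suc n)). f p) = (\<Sum>q\<in>paths (Suc n). f (path_prepend 1 q) + f (path_prepend (-1) q))"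
proof -
  have "(\<Sum>p\<in>paths (Suc (Suc n)). f p) = (\<Sum>(s, q)\<in>{1::int, -1} \<times> paths (Suc n). f (path_prepend s q))"
    unfolding paths_Suc_Suc by (subst sum.reindex[OF inj_on_path_prepend]) (simp add: case_prod_beta')
  also have "\<dots> = (\<Sum>s\<in>{1::int, -1}. \<Sum>q\<in>paths (Suc n). f (path_prepend s q))"
    by (rule sum.cartesian_product[symmetric])
  also have "\<dots> = (\<Sum>q\<in>paths (Suc n). f (path_prepend 1 q) + f (path_prepend (-1) q))"
    by (simp add: sum.distrib)
  finally show ?thesis .
qed

lemma paths_nth_abs_le:
  assumes "p \<in> paths m" and "i < m"
  shows "\<bar>p ! i\<bar> \<le> int i \<and> p ! i mod 2 = int i mod 2"
  using assms(2)
proof (induction i)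
  case (Suc i)
  then have "\<bar>p ! (i + 1) - p ! i\<bar> = 1"
    using assms(1) by (simp add: paths_def)
  then have "p ! Suc i = p ! i + 1 \<or> p ! Suc i = p ! i - 1" by auto
  with Suc show ?case by auto presburger+
qed (use assms(1) in \<open>simp add: paths_def\<close>)

lemma path_vertices_subset: "p \<in> paths m \<Longrightarrow> path_vertices p \<subseteq> lattice_V m"
  using paths_nth_abs_le by (fastforce simp: path_vertices_def lattice_V_def length_paths)

lemma finite_lattice_V: "finite (lattice_V m)"
proof (rule finite_subset)
  show "lattice_V m \<subseteq> {0..int m} \<times> {- int m..int m}"
    unfolding lattice_V_def by auto
qed simp

lemma sum_paths_nth_sq: "i < Suc n \<Longrightarrow> (\<Sum>p\<in>paths (Suc n). (real_of_int (p ! i))\<^sup>2) = real i * 2 ^ n"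
proof (induction n arbitrary: i)
  case (Suc n)
  show ?case
  proof (cases i)
    case (Suc j)
    with Suc.prems have j: "j < Suc n" by simp
    have "(\<Sum>p\<in>paths (Suc (Suc n)). (real_of_int (p ! i))\<^sup>2)
        = (\<Sum>q\<in>paths (Suc n). (real_of_int (q ! j) + 1)\<^sup>2 + (real_of_int (q ! j) - 1)\<^sup>2)"
      unfolding sum_paths_Suc_Suc Suc using j by (intro sum.cong refl) (simp add: length_paths)
    also have "\<dots> = (\<Sum>q\<in>paths (Suc n). 2 * (real_of_int (q ! j))\<^sup>2 + 2)"
      by (simp add: power2_eq_square algebra_simps)
    also have "\<dots> = real i * 2 ^ Suc n"
      using Suc by (simp add: sum.distrib sum_distrib_left[symmetric] Suc.IH[OF j] card_paths algebra_simps)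
    finally show ?thesis .
  qed (simp add: sum_paths_Suc_Suc)
qed (simp add: paths_1)

section \<open>Meetings of two independent paths\<close>

text \<open>For independent uniform paths the offset \<open>q\<^sub>i - p\<^sub>i\<close> is a lazy random walk with steps
  \<open>-2, 0, 0, 2\<close>; \<open>walk_avg\<close> is its transition operator.\<close>

definition meet_count :: "int \<Rightarrow> int list \<Rightarrow> int list \<Rightarrow> nat" where
  "meet_count e p q = (\<Sum>i<length p. if p ! i + e = q ! i then 1 else 0)"

definition walk_avg :: "(int \<Rightarrow> real) \<Rightarrow> int \<Rightarrow> real" where
  "walk_avg f e = (f (e - 2) + 2 * f e + f (e + 2)) / 4"

fun meet_mgf :: "real \<Rightarrow> nat \<Rightarrow> int \<Rightarrow> real" where
  "meet_mgf l 0 e = exp (l * of_bool (e = 0))"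
| "meet_mgf l (Suc n) e = exp (l * of_bool (e = 0)) * walk_avg (meet_mgf l n) e"

fun expected_visits :: "nat \<Rightarrow> int \<Rightarrow> real" where
  "expected_visits 0 e = of_bool (e = 0)"
| "expected_visits (Suc k) e = of_bool (e = 0) + walk_avg (expected_visits k) e"

lemma meet_count_path_prepend:
  assumes "length p = length q"
  shows "meet_count e (path_prepend s p) (path_prepend s' q) = (if e = 0 then 1 else 0) + meet_count (e + s - s') p q"
proof -
  have "meet_count e (path_prepend s p) (path_prepend s' q)
      = (if e = 0 then 1 else 0) + (\<Sum>i<length p. if path_prepend s p ! Suc i + e = path_prepend s' q ! Suc i then 1 else 0)"
    unfolding meet_count_def path_prepend_nth(3) sum.lessThan_Suc_shift by simp
  also have "(\<Sum>i<length p. if path_prepend s p ! Suc i + e = path_prepend s' q ! Suc i then 1 else 0) = meet_count (e + s - s') p q"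
    unfolding meet_count_def using assms by (intro sum.cong refl) auto
  finally show ?thesis .
qed

lemma sum_exp_meet_count:
  fixes l :: real
  shows "(\<Sum>p\<in>paths (Suc n). \<Sum>q\<in>paths (Suc n). exp (l * meet_count e p q)) = 4 ^ n * meet_mgf l n e"
proof (induction n arbitrary: e)
  case 0
  show ?case by (simp add: paths_1 meet_count_def)
next
  case (Suc n)
  define S where "S e = (\<Sum>p\<in>paths (Suc n). \<Sum>q\<in>paths (Suc n). exp (l * meet_count e p q))" for e
  have prepend: "exp (l * meet_count e (path_prepend s p) (path_prepend s' q))
      = exp (l * of_bool (e = 0)) * exp (l * meet_count (e + s - s') p q)"
    if "p \<in> paths (Suc n)" "q \<in> paths (Suc n)" for s s' p q
    using that by (simp add: meet_count_path_prepend length_paths exp_add[symmetric] algebra_simps)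
  have "(\<Sum>p\<in>paths (Suc (Suc n)). \<Sum>q\<in>paths (Suc (Suc n)). exp (l * meet_count e p q))
     = (\<Sum>p\<in>paths (Suc n). \<Sum>q\<in>paths (Suc n).
          exp (l * meet_count e (path_prepend 1 p) (path_prepend 1 q))
        + exp (l * meet_count e (path_prepend 1 p) (path_prepend (-1) q))
        + exp (l * meet_count e (path_prepend (-1) p) (path_prepend 1 q))
        + exp (l * meet_count e (path_prepend (-1) p) (path_prepend (-1) q)))"
    by (simp add: sum_paths_Suc_Suc sum.distrib algebra_simps)
  also have "\<dots> = (\<Sum>p\<in>paths (Suc n). \<Sum>q\<in>paths (Suc n). exp (l * of_bool (e = 0)) *
          (exp (l * meet_count e p q) + exp (l * meet_count (e + 2) p q)
         + exp (l * meet_count (e - 2) p q) + exp (l * meet_count e p q)))"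
    by (intro sum.cong refl) (simp add: prepend algebra_simps)
  also have "\<dots> = exp (l * of_bool (e = 0)) * (S e + S (e + 2) + S (e - 2) + S e)"
    by (simp only: S_def sum.distrib sum_distrib_left distrib_left)
  also have "\<dots> = 4 ^ Suc n * meet_mgf l (Suc n) e"
    using Suc.IH unfolding S_def by (simp add: walk_avg_def algebra_simps)
  finally show ?case .
qed

lemma expected_visits_nonneg: "0 \<le> expected_visits k e"
  by (induction k arbitrary: e) (simp_all add: walk_avg_def add_nonneg_nonneg)

lemma walk_avg_affine: "walk_avg (\<lambda>e. b + d * f e) e = b + d * walk_avg f e"
  by (simp add: walk_avg_def algebra_simps)

lemma walk_avg_mono: "(\<And>e. f e \<le> g e) \<Longrightarrow> walk_avg f e \<le> walk_avg g e"
  unfolding walk_avg_def by (intro divide_right_mono add_mono mult_left_mono) auto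

lemma expected_visits_mono:
  assumes "k \<le> n"
  shows "expected_visits k e \<le> expected_visits n e"
proof -
  have "expected_visits k e \<le> expected_visits (Suc k) e" for k e
  proof (induction k arbitrary: e)
    case 0
    show ?case using expected_visits_nonneg[of 0] by (simp add: walk_avg_def add_nonneg_nonneg)
  next
    case (Suc k)
    then show ?case by (simp add: walk_avg_mono)
  qed
  then show ?thesis
    using lift_Suc_mono_le[of "\<lambda>k. expected_visits k e"] assms by blast
qed

lemma meet_mgf_le_expected_visits:
  fixes l c :: real
  assumes l: "0 \<le> l" and k: "k \<le> n"
    and c: "1 \<le> c" "c * (1 - (exp l - 1) * expected_visits n 0) = 1"
  shows "meet_mgf l k e \<le> 1 + c * (exp l - 1) * expected_visits k e"
  using k
proof (induction k arbitrary: e)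
  define a where "a = exp l - 1"
  have a: "0 \<le> a" using l by (simp add: a_def)
  {
    case 0
    show ?case using mult_right_mono[OF c(1) a] by (simp add: a_def)
  next
    case (Suc k)
    have IH: "walk_avg (meet_mgf l k) e \<le> 1 + c * a * walk_avg (expected_visits k) e" for e
      using Suc walk_avg_mono[of "meet_mgf l k" "\<lambda>e. 1 + c * a * expected_visits k e"]
      by (simp add: walk_avg_affine a_def)
    show ?case
    proof (cases "e = 0")
      case True
      define h where "h = walk_avg (expected_visits k) 0"
      have "1 + h \<le> expected_visits n 0"
        using expected_visits_mono[OF Suc.prems, of 0] by (simp add: h_def)
      then have "c * (1 - (exp l - 1) * expected_visits n 0) \<le> c * (1 - a * h)"
        using a c(1) by (intro mult_left_mono) (auto simp: a_def intro: mult_left_mono)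
      then have "1 \<le> c * (1 - a * h)"
        using c(2) by simp
      then have key: "1 + a * c * h \<le> c"
        by (simp add: algebra_simps)
      have "meet_mgf l (Suc k) 0 = (1 + a) * walk_avg (meet_mgf l k) 0"
        by (simp add: a_def)
      also have "\<dots> \<le> (1 + a) * (1 + c * a * h)"
        using IH a unfolding h_def by (intro mult_left_mono) auto
      also have "\<dots> = 1 + c * a * (1 + h) + a * (1 + a * c * h - c)"
        by (simp add: algebra_simps)
      also have "\<dots> \<le> 1 + c * a * (1 + h)"
        using key a by (simp add: mult_nonneg_nonpos)
      finally show ?thesis
        using True by (simp add: h_def a_def)
    next
      case False
      then show ?thesis using IH by (simp add: a_def)
    qed
  }
qed

lemma meet_mgf_le:
  fixes l :: real
  assumes "0 \<le> l" and "(exp l - 1) * expected_visits n 0 < 1"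
  shows "meet_mgf l n 0 \<le> 1 / (1 - (exp l - 1) * expected_visits n 0)"
proof -
  define c where "c = 1 / (1 - (exp l - 1) * expected_visits n 0)"
  have "0 \<le> (exp l - 1) * expected_visits n 0"
    using assms(1) expected_visits_nonneg[of n 0] by simp
  then have c: "1 \<le> c" "c * (1 - (exp l - 1) * expected_visits n 0) = 1"
    using assms(2) by (simp_all add: c_def)
  have "meet_mgf l n 0 \<le> 1 + c * (exp l - 1) * expected_visits n 0"
    using meet_mgf_le_expected_visits[OF assms(1) order_refl c] .
  also have "\<dots> = c"
    using c(2) by (simp add: algebra_simps)
  finally show ?thesis
    by (simp add: c_def)
qed

section \<open>The expected number of returns\<close>

definition pascal_row :: "nat \<Rightarrow> int \<Rightarrow> real" where
  "pascal_row t j = (if j < 0 then 0 else real ((2 * t) choose nat j))"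

lemma pascal_row_Suc: "pascal_row (Suc t) j = pascal_row t (j - 2) + 2 * pascal_row t (j - 1) + pascal_row t j"
proof -
  consider "j < 0" | "j = 0" | "j = 1" | "j \<ge> 2"
    by linarith
  then show ?thesis
  proof cases
    case 4
    define i where "i = nat (j - 2)"
    have "nat j = Suc (Suc i)" "nat (j - 1) = Suc i" "nat (j - 2) = i"
      using 4 by (simp_all add: i_def)
    moreover have "Suc (Suc (2 * t)) choose Suc (Suc i)
        = (2 * t choose i) + 2 * (2 * t choose Suc i) + (2 * t choose Suc (Suc i))"
      by simp
    ultimately show ?thesis
      using 4 by (simp add: pascal_row_def del: binomial_Suc_Suc)
  qed (simp_all add: pascal_row_def)
qed

text \<open>\<open>pascal_row t (t + d) / 4\<^sup>t\<close> is the probability that the walk started at \<open>2d\<close> is at \<open>0\<close> after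
  \<open>t\<close> steps.\<close>

lemma expected_visits_eq_sum: "expected_visits k (2 * d) = (\<Sum>t\<le>k. pascal_row t (int t + d) / 4 ^ t)"
proof (induction k arbitrary: d)
  case 0
  show ?case by (simp add: pascal_row_def)
next
  case (Suc k)
  define f where "f t d = pascal_row t (int t + d) / 4 ^ t" for t d
  have shift: "2 * d - 2 = 2 * (d - 1)" "2 * d + 2 = 2 * (d + 1)" by simp_all
  have "walk_avg (expected_visits k) (2 * d) = (\<Sum>t\<le>k. (f t (d - 1) + 2 * f t d + f t (d + 1)) / 4)"
    unfolding walk_avg_def shift Suc.IH f_def[symmetric]
    by (simp only: sum_divide_distrib[symmetric] sum.distrib sum_distrib_left[symmetric])
  also have "\<dots> = (\<Sum>t\<le>k. f (Suc t) d)"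
  proof (intro sum.cong refl)
    fix t
    have "pascal_row (Suc t) (int (Suc t) + d)
        = pascal_row t (int t + (d - 1)) + 2 * pascal_row t (int t + d) + pascal_row t (int t + (d + 1))"
      by (simp add: pascal_row_Suc algebra_simps)
    then show "(f t (d - 1) + 2 * f t d + f t (d + 1)) / 4 = f (Suc t) d"
      by (simp add: f_def field_simps)
  qed
  finally have "walk_avg (expected_visits k) (2 * d) = (\<Sum>t\<le>k. f (Suc t) d)" .
  moreover have "(\<Sum>t\<le>Suc k. pascal_row t (int t + d) / 4 ^ t) = f 0 d + (\<Sum>t\<le>k. f (Suc t) d)"
    unfolding f_def by (rule sum.atMost_Suc_shift)
  moreover have "f 0 d = of_bool (2 * d = 0)"
    by (simp add: f_def pascal_row_def)
  ultimately show ?case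
    by simp
qed

lemma central_binomial_Suc: "(2 * Suc t choose Suc t) * Suc t = 2 * Suc (2 * t) * (2 * t choose t)"
proof -
  have a: "(2 * Suc t choose Suc t) * Suc t = 2 * Suc t * (Suc (2 * t) choose t)"
    using Suc_times_binomial_eq[of "Suc (2 * t)" t] by (simp del: binomial_Suc_Suc)
  have b: "Suc (2 * t) choose t = Suc (2 * t) choose Suc t"
    using binomial_symmetric[of t "Suc (2 * t)"] by (simp del: binomial_Suc_Suc)
  have c: "(Suc (2 * t) choose Suc t) * Suc t = Suc (2 * t) * (2 * t choose t)"
    using Suc_times_binomial_eq[of "2 * t" t] by (simp del: binomial_Suc_Suc)
  have "(2 * Suc t choose Suc t) * Suc t * Suc t = 2 * Suc t * ((Suc (2 * t) choose Suc t) * Suc t)"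
    unfolding a b by (simp only: ac_simps)
  also have "\<dots> = 2 * Suc (2 * t) * (2 * t choose t) * Suc t"
    unfolding c by (simp only: ac_simps)
  finally show ?thesis by (simp only: mult_right_cancel)
qed

lemma central_binomial_ratio_sq_le: "(real ((2 * t) choose t) / 4 ^ t)\<^sup>2 * (real t + 1) \<le> 1"
proof (induction t)
  case (Suc t)
  define u where "u t = real ((2 * t) choose t) / 4 ^ t" for t
  define B where "B = real ((2 * t) choose t)"
  define C where "C = real (2 * Suc t choose Suc t)"
  have BC: "C * (real t + 1) = 2 * (2 * real t + 1) * B"
    unfolding B_def C_def using arg_cong[OF central_binomial_Suc[of t], of real]
    by (simp only: of_nat_mult of_nat_Suc) (simp add: algebra_simps)
  have "u (Suc t) * (2 * real t + 2) = C * (real t + 1) / (2 * 4 ^ t)"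
    unfolding u_def C_def[symmetric] by (simp add: field_simps)
  also have "\<dots> = u t * (2 * real t + 1)"
    unfolding BC u_def B_def[symmetric] by (simp add: field_simps)
  finally have "u (Suc t) * (2 * real t + 2) = u t * (2 * real t + 1)" .
  then have "(u (Suc t))\<^sup>2 * (real (Suc t) + 1) * (2 * real t + 2)\<^sup>2 = (u t)\<^sup>2 * ((2 * real t + 1)\<^sup>2 * (real t + 2))"
    by (simp add: power_mult_distrib[symmetric] algebra_simps)
  also have "\<dots> \<le> (u t)\<^sup>2 * (4 * (real t + 1) ^ 3)"
    by (intro mult_left_mono) (simp_all add: power2_eq_square power3_eq_cube algebra_simps)
  also have "\<dots> = ((u t)\<^sup>2 * (real t + 1)) * (2 * real t + 2)\<^sup>2"
    by (simp add: power2_eq_square power3_eq_cube algebra_simps)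
  also have "\<dots> \<le> (2 * real t + 2)\<^sup>2"
    using Suc.IH by (intro mult_left_le_one_le) (simp_all add: u_def)
  finally have "(u (Suc t))\<^sup>2 * (real (Suc t) + 1) \<le> 1"
    by (simp del: of_nat_Suc)
  then show ?case
    by (simp only: u_def)
qed simp
lemma sum_inverse_sqrt_le: "(\<Sum>t\<le>n. 1 / sqrt (real t + 1)) \<le> 2 * sqrt (real n + 1)"
proof (induction n)
  case (Suc n)
  define r where "r = sqrt (real n + 2)"
  define s where "s = sqrt (real n + 1)"
  have r: "0 < r" "r * r = real n + 2" and s: "s * s = real n + 1"
    by (simp_all add: r_def s_def)
  have "0 \<le> (r - s) * (r - s)"
    by simp
  then have "2 * (s * r) \<le> 2 * real n + 3"
    using r s by (simp add: algebra_simps)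
  then have "(2 * s + 1 / r) * r \<le> 2 * r * r"
    using r by (simp add: distrib_right)
  then have "2 * s + 1 / r \<le> 2 * r"
    using r by simp
  then show ?case
    using Suc.IH by (simp add: r_def s_def add.commute)
qed simp

lemma expected_visits_le: "expected_visits n 0 \<le> 2 * sqrt (real n + 1)"
proof -
  have "expected_visits n 0 = (\<Sum>t\<le>n. real ((2 * t) choose t) / 4 ^ t)"
    using expected_visits_eq_sum[of n 0] by (simp add: pascal_row_def)
  also have "\<dots> \<le> (\<Sum>t\<le>n. 1 / sqrt (real t + 1))"
  proof (rule sum_mono)
    fix t
    have "(real ((2 * t) choose t) / 4 ^ t)\<^sup>2 \<le> 1 / (real t + 1)"
      using central_binomial_ratio_sq_le[of t] by (simp add: field_simps)
    then have "real ((2 * t) choose t) / 4 ^ t \<le> sqrt (1 / (real t + 1))"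
      by (rule real_le_rsqrt)
    then show "real ((2 * t) choose t) / 4 ^ t \<le> 1 / sqrt (real t + 1)"
      by (simp add: real_sqrt_divide)
  qed
  also have "\<dots> \<le> 2 * sqrt (real n + 1)"
    by (rule sum_inverse_sqrt_le)
  finally show ?thesis .
qed

section \<open>The lower bound\<close>

definition path_mean :: "real \<Rightarrow> int list \<Rightarrow> int \<times> int \<Rightarrow> real" where
  "path_mean mu p v = (if v \<in> path_vertices p then mu else 0)"

lemma P1_eq_PiM: "P1 m mu p = PiM (lattice_V m) (\<lambda>v. gauss (path_mean mu p v))"
  unfolding P1_def path_mean_def by (rule PiM_cong) auto

lemma P1_eq_density: "P1 m mu p = density (P0 m) (gauss_lr (lattice_V m) (path_mean mu p))"
  unfolding P1_eq_PiM P0_def by (rule density_gauss_lr[symmetric]) (rule finite_lattice_V)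

lemma sets_P0: "sets (P0 m) = sets (PiM (lattice_V m) (\<lambda>_. borel))"
  unfolding P0_def by (rule sets_PiM_cong) simp_all

lemma sets_P1: "sets (P1 m mu p) = sets (P0 m)"
  unfolding P1_eq_PiM P0_def by (rule sets_PiM_cong) simp_all

lemma space_P1: "space (P1 m mu p) = space (P0 m)"
  by (rule sets_eq_imp_space_eq[OF sets_P1])

lemma prob_space_P0: "prob_space (P0 m)"
  using prob_space_PiM_gauss[of _ "\<lambda>_. 0"] by (simp add: P0_def)

lemma prob_space_P1: "prob_space (P1 m mu p)"
  unfolding P1_eq_PiM by (rule prob_space_PiM_gauss)

lemma sets_test:
  assumes "T \<in> tests m"
  shows "{x \<in> space (P0 m). T x} \<in> sets (P0 m)"
proof -
  have "T \<in> measurable (P0 m) (count_space UNIV)"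
    using assms unfolding tests_def by (simp add: measurable_cong_sets[OF sets_P0 refl])
  then have "T -` {True} \<inter> space (P0 m) \<in> sets (P0 m)"
    by (rule measurable_sets) simp
  then show ?thesis
    by (simp add: vimage_def Int_def conj_commute)
qed

lemma card_path_vertices_inter:
  assumes "p \<in> paths m" "q \<in> paths m"
  shows "card (path_vertices p \<inter> path_vertices q) = meet_count 0 p q"
proof -
  have len: "length p = m" "length q = m"
    using assms by (simp_all add: length_paths)
  have "path_vertices p \<inter> path_vertices q = (\<lambda>i. (int i, p ! i)) ` {i \<in> {..<m}. p ! i = q ! i}"
    unfolding path_vertices_def using len by auto
  moreover have "inj_on (\<lambda>i. (int i, p ! i)) {i \<in> {..<m}. p ! i = q ! i}"
    by (rule inj_onI) simp
  ultimately have "card (path_vertices p \<inter> path_vertices q) = card {i \<in> {..<m}. p ! i = q ! i}"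
    by (simp only: card_image)
  also have "\<dots> = meet_count 0 p q"
    unfolding meet_count_def len by (simp add: sum.inter_filter[symmetric])
  finally show ?thesis .
qed

lemma sum_path_mean_mult:
  assumes "p \<in> paths m" "q \<in> paths m"
  shows "(\<Sum>v\<in>lattice_V m. path_mean mu p v * path_mean mu q v) = mu\<^sup>2 * meet_count 0 p q"
proof -
  have "(\<Sum>v\<in>lattice_V m. path_mean mu p v * path_mean mu q v)
      = (\<Sum>v\<in>lattice_V m. if v \<in> path_vertices p \<inter> path_vertices q then mu\<^sup>2 else 0)"
    by (intro sum.cong refl) (simp add: path_mean_def power2_eq_square)
  also have "\<dots> = mu\<^sup>2 * card (lattice_V m \<inter> (path_vertices p \<inter> path_vertices q))"
    by (simp add: sum.If_cases[OF finite_lattice_V] Int_def)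
  also have "lattice_V m \<inter> (path_vertices p \<inter> path_vertices q) = path_vertices p \<inter> path_vertices q"
    using path_vertices_subset[OF assms(1)] by auto
  finally show ?thesis
    using card_path_vertices_inter[OF assms] by simp
qed

text \<open>\<open>gauss_lr (lattice_V m) (path_mean mu p) x = exp (mu X\<^sub>p - m mu\<^sup>2 / 2)\<close>, so this is the
  likelihood ratio \<open>L\<^sub>m\<close> of the uniform mixture of the alternatives against \<open>H\<^sub>0\<close>.\<close>

definition likelihood_ratio :: "nat \<Rightarrow> real \<Rightarrow> ((int \<times> int) \<Rightarrow> real) \<Rightarrow> real" where
  "likelihood_ratio m mu x = (\<Sum>p\<in>paths m. gauss_lr (lattice_V m) (path_mean mu p) x) / card (paths m)"

lemma likelihood_ratio_integral:
  "integrable (P0 (Suc n)) (likelihood_ratio (Suc n) mu)"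
  "(\<integral>x. likelihood_ratio (Suc n) mu x \<partial>P0 (Suc n)) = 1"
  unfolding likelihood_ratio_def P0_def
  using gauss_lr_integral[OF finite_lattice_V] finite_paths[of n] card_paths[of n]
  by simp_all

lemma likelihood_ratio_sq_integral:
  "integrable (P0 (Suc n)) (\<lambda>x. (likelihood_ratio (Suc n) mu x)\<^sup>2)"
  "(\<integral>x. (likelihood_ratio (Suc n) mu x)\<^sup>2 \<partial>P0 (Suc n)) = meet_mgf (mu\<^sup>2) n 0"
proof -
  let ?l = "\<lambda>p. gauss_lr (lattice_V (Suc n)) (path_mean mu p)"
  have "(2::real) ^ n * 2 ^ n = 4 ^ n"
    by (simp flip: power_mult_distrib)
  then have square: "(likelihood_ratio (Suc n) mu x)\<^sup>2 = (\<Sum>p\<in>paths (Suc n). \<Sum>q\<in>paths (Suc n). ?l p x * ?l q x) / 4 ^ n" for x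
    by (simp add: likelihood_ratio_def card_paths power2_eq_square sum_product)
  show "integrable (P0 (Suc n)) (\<lambda>x. (likelihood_ratio (Suc n) mu x)\<^sup>2)"
    unfolding square P0_def by (simp add: gauss_lr_mult_integral(1)[OF finite_lattice_V])
  have "(\<integral>x. (likelihood_ratio (Suc n) mu x)\<^sup>2 \<partial>P0 (Suc n))
      = (\<Sum>p\<in>paths (Suc n). \<Sum>q\<in>paths (Suc n). exp (mu\<^sup>2 * meet_count 0 p q)) / 4 ^ n"
    unfolding square P0_def
    by (simp add: gauss_lr_mult_integral[OF finite_lattice_V] sum_path_mean_mult)
  also have "\<dots> = meet_mgf (mu\<^sup>2) n 0"
    by (simp add: sum_exp_meet_count)
  finally show "(\<integral>x. (likelihood_ratio (Suc n) mu x)\<^sup>2 \<partial>P0 (Suc n)) = meet_mgf (mu\<^sup>2) n 0" .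
qed

lemma measure_P1_not_test:
  assumes T: "T \<in> tests m"
  defines "A \<equiv> {x \<in> space (P0 m). T x}"
  shows "measure (P1 m mu p) {x \<in> space (P1 m mu p). \<not> T x}
    = 1 - (\<integral>x. gauss_lr (lattice_V m) (path_mean mu p) x * indicator A x \<partial>P0 m)"
proof -
  interpret prob_space "P1 m mu p" by (rule prob_space_P1)
  have A: "A \<in> events"
    unfolding A_def sets_P1 using T by (rule sets_test)
  have l: "gauss_lr (lattice_V m) (path_mean mu p) \<in> borel_measurable (P0 m)"
    unfolding P0_def by (rule borel_measurable_gauss_lr[OF finite_lattice_V])
  have "prob A = (\<integral>x. indicator A x \<partial>P1 m mu p)"
    using A by simp
  also have "\<dots> = (\<integral>x. gauss_lr (lattice_V m) (path_mean mu p) x *\<^sub>R indicator A x \<partial>P0 m)"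
    unfolding P1_eq_density using A l by (intro integral_density) (auto simp: sets_P1 gauss_lr_nonneg)
  finally have "prob A = (\<integral>x. gauss_lr (lattice_V m) (path_mean mu p) x * indicator A x \<partial>P0 m)"
    by simp
  moreover have "{x \<in> space (P1 m mu p). \<not> T x} = space (P1 m mu p) - A"
    unfolding A_def space_P1 by auto
  ultimately show ?thesis
    using prob_compl[OF A] by simp
qed

lemma bayes_risk_of_eq:
  assumes T: "T \<in> tests (Suc n)"
  defines "A \<equiv> {x \<in> space (P0 (Suc n)). T x}"
  shows "bayes_risk_of (Suc n) mu T
    = 1 - (\<integral>x. (likelihood_ratio (Suc n) mu x - 1) * indicator A x \<partial>P0 (Suc n))"
proof -
  let ?M = "P0 (Suc n)" and ?l = "\<lambda>p. gauss_lr (lattice_V (Suc n)) (path_mean mu p)"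
  let ?N = "real (card (paths (Suc n)))"
  interpret prob_space ?M by (rule prob_space_P0)
  have A: "A \<in> events"
    unfolding A_def using T by (rule sets_test)
  have l_integrable: "integrable ?M (\<lambda>x. ?l p x * indicator A x)" for p
  proof -
    have "integrable ?M (?l p)"
      unfolding P0_def by (rule gauss_lr_integral(1)[OF finite_lattice_V])
    from integrable_mult_indicator[OF A this] show ?thesis
      by (simp add: mult.commute)
  qed
  have N: "0 < ?N"
    by (simp add: card_paths)
  have "(\<lambda>x. (likelihood_ratio (Suc n) mu x - 1) * indicator A x)
      = (\<lambda>x. (\<Sum>p\<in>paths (Suc n). ?l p x * indicator A x) / ?N - indicator A x)"
    by (simp add: likelihood_ratio_def fun_eq_iff left_diff_distrib sum_distrib_right)
  then have "(\<integral>x. (likelihood_ratio (Suc n) mu x - 1) * indicator A x \<partial>?M)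
      = (\<integral>x. (\<Sum>p\<in>paths (Suc n). ?l p x * indicator A x) / ?N \<partial>?M) - (\<integral>x. indicator A x \<partial>?M)"
    using A l_integrable by (simp add: Bochner_Integration.integral_diff emeasure_eq_measure)
  also have "\<dots> = (\<Sum>p\<in>paths (Suc n). \<integral>x. ?l p x * indicator A x \<partial>?M) / ?N - prob A"
    using A l_integrable by (simp add: Bochner_Integration.integral_sum)
  finally have "(\<integral>x. (likelihood_ratio (Suc n) mu x - 1) * indicator A x \<partial>?M)
      = (\<Sum>p\<in>paths (Suc n). \<integral>x. ?l p x * indicator A x \<partial>?M) / ?N - prob A" .
  moreover have "bayes_risk_of (Suc n) mu T
      = prob A + (?N - (\<Sum>p\<in>paths (Suc n). \<integral>x. ?l p x * indicator A x \<partial>?M)) / ?N"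
    unfolding bayes_risk_of_def measure_P1_not_test[OF T] A_def
    by (simp add: sum_subtractf)
  ultimately show ?thesis
    using N by (simp add: diff_divide_distrib)
qed

lemma (in prob_space) integral_mult_indicator_sq_le:
  fixes f :: "'a \<Rightarrow> real"
  assumes f: "integrable M f" and f2: "integrable M (\<lambda>x. (f x)\<^sup>2)" and A: "A \<in> events"
  shows "(\<integral>x. f x * indicator A x \<partial>M)\<^sup>2 \<le> (\<integral>x. (f x)\<^sup>2 \<partial>M)"
proof -
  let ?g = "\<lambda>x. f x * indicator A x"
  have square: "(?g x)\<^sup>2 = indicator A x * (f x)\<^sup>2" for x
    by (simp split: split_indicator)
  have g: "integrable M ?g" "integrable M (\<lambda>x. (?g x)\<^sup>2)"
    unfolding square using integrable_mult_indicator[OF A f] integrable_mult_indicator[OF A f2]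
    by (simp_all add: mult.commute)
  have "(\<integral>x. ?g x \<partial>M)\<^sup>2 \<le> (\<integral>x. (?g x)\<^sup>2 \<partial>M)"
    using variance_positive[of ?g] variance_eq[OF g] by simp
  also have "\<dots> \<le> (\<integral>x. (f x)\<^sup>2 \<partial>M)"
    using g(2) f2 by (intro integral_mono) (auto simp: indicator_def)
  finally show ?thesis .
qed

text \<open>By Cauchy-Schwarz, \<open>E\<^sub>0[(L\<^sub>m - 1) 1\<^sub>A]\<^sup>2 \<le> E\<^sub>0[(L\<^sub>m - 1)\<^sup>2] = E\<^sub>0[L\<^sub>m\<^sup>2] - 1\<close>.\<close>

lemma bayes_risk_of_ge:
  assumes "T \<in> tests (Suc n)"
  shows "1 - sqrt (meet_mgf (mu\<^sup>2) n 0 - 1) \<le> bayes_risk_of (Suc n) mu T"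
proof -
  let ?M = "P0 (Suc n)" and ?L = "likelihood_ratio (Suc n) mu"
  interpret prob_space ?M by (rule prob_space_P0)
  have L: "integrable ?M ?L" "integrable ?M (\<lambda>x. (?L x)\<^sup>2)"
    by (simp_all add: likelihood_ratio_integral likelihood_ratio_sq_integral)
  have square: "(?L x - 1)\<^sup>2 = (?L x)\<^sup>2 - 2 * ?L x + 1" for x
    by (simp add: power2_diff)
  have "integrable ?M (\<lambda>x. (?L x - 1)\<^sup>2)"
    unfolding square using L by simp
  moreover have "(\<integral>x. (?L x - 1)\<^sup>2 \<partial>?M) = meet_mgf (mu\<^sup>2) n 0 - 1"
    unfolding square using L by (simp add: likelihood_ratio_integral likelihood_ratio_sq_integral prob_space)
  ultimately have "(\<integral>x. (?L x - 1) * indicator {x \<in> space ?M. T x} x \<partial>?M)\<^sup>2 \<le> meet_mgf (mu\<^sup>2) n 0 - 1"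
    using integral_mult_indicator_sq_le[of "\<lambda>x. ?L x - 1"] L sets_test[OF assms] by simp
  then have "(\<integral>x. (?L x - 1) * indicator {x \<in> space ?M. T x} x \<partial>?M) \<le> sqrt (meet_mgf (mu\<^sup>2) n 0 - 1)"
    by (rule real_le_rsqrt)
  then show ?thesis
    using bayes_risk_of_eq[OF assms] by simp
qed

lemma bayes_risk_of_nonneg: "0 \<le> bayes_risk_of m mu T"
  unfolding bayes_risk_of_def by (intro add_nonneg_nonneg mult_nonneg_nonneg sum_nonneg) auto

lemma bayes_risk_le_bayes_risk_of: "T \<in> tests m \<Longrightarrow> bayes_risk m mu \<le> bayes_risk_of m mu T"
  unfolding bayes_risk_def by (rule cINF_lower) (auto intro: bdd_belowI2 bayes_risk_of_nonneg)

lemma const_False_in_tests: "(\<lambda>_. False) \<in> tests m"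
  unfolding tests_def by simp

lemma bayes_risk_nonneg: "0 \<le> bayes_risk m mu"
  unfolding bayes_risk_def using const_False_in_tests
  by (intro cINF_greatest bayes_risk_of_nonneg) blast

lemma bayes_risk_le_1: "bayes_risk (Suc n) mu \<le> 1"
proof -
  have "bayes_risk (Suc n) mu \<le> bayes_risk_of (Suc n) mu (\<lambda>_. False)"
    by (rule bayes_risk_le_bayes_risk_of[OF const_False_in_tests])
  also have "\<dots> = 1"
    using prob_space.prob_space[OF prob_space_P1] finite_paths[of n] card_paths[of n]
    by (simp add: bayes_risk_of_def)
  finally show ?thesis .
qed

lemma bayes_risk_ge: "1 - sqrt (meet_mgf (mu\<^sup>2) n 0 - 1) \<le> bayes_risk (Suc n) mu"
  unfolding bayes_risk_def using const_False_in_tests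
  by (intro cINF_greatest bayes_risk_of_ge) blast

section \<open>The upper bound\<close>

definition band :: "nat \<Rightarrow> nat \<Rightarrow> (int \<times> int) set" where
  "band m k = {v \<in> lattice_V m. \<bar>snd v\<bar> \<le> int k}"

text \<open>The test compares the total observation in the band \<open>|j| \<le> k\<close> with half the mean it has under
  an alternative whose path spends at least half of its time in the band.\<close>

definition band_test :: "nat \<Rightarrow> real \<Rightarrow> nat \<Rightarrow> ((int \<times> int) \<Rightarrow> real) \<Rightarrow> bool" where
  "band_test m mu k x \<longleftrightarrow> mu * real m / 4 \<le> (\<Sum>v\<in>band m k. x v)"

definition time_in_band :: "nat \<Rightarrow> int list \<Rightarrow> nat" where
  "time_in_band k p = card {i. i < length p \<and> \<bar>p ! i\<bar> \<le> int k}"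

lemma band_subset: "band m k \<subseteq> lattice_V m"
  by (auto simp: band_def)

lemma band_test_in_tests: "band_test m mu k \<in> tests m"
proof -
  have "(\<lambda>x. x v :: real) \<in> borel_measurable (PiM (lattice_V m) (\<lambda>_. borel))" if "v \<in> band m k" for v
    using that band_subset by (intro measurable_component_singleton) auto
  then have [measurable]: "(\<lambda>x. \<Sum>v\<in>band m k. x v :: real) \<in> borel_measurable (PiM (lattice_V m) (\<lambda>_. borel))"
    by (rule borel_measurable_sum)
  show ?thesis
    unfolding tests_def band_test_def by measurable
qed

lemma card_band_le: "card (band m k) \<le> m * (2 * k + 1)"
proof -
  have "band m k \<subseteq> int ` {..<m} \<times> {- int k..int k}"
  proof
    fix v assume "v \<in> band m k"
    moreover obtain i j where "v = (i, j)"
      by fastforce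
    ultimately show "v \<in> int ` {..<m} \<times> {- int k..int k}"
      by (auto simp: band_def lattice_V_def intro!: image_eqI[of i int "nat i"])
  qed
  then have "card (band m k) \<le> card (int ` {..<m} \<times> {- int k..int k})"
    by (intro card_mono) simp_all
  also have "\<dots> = m * (2 * k + 1)"
    by (simp add: card_cartesian_product card_image nat_add_distrib nat_mult_distrib)
  finally show ?thesis .
qed

lemma sum_path_mean_band:
  assumes p: "p \<in> paths m"
  shows "(\<Sum>v\<in>band m k. path_mean mu p v) = mu * time_in_band k p"
proof -
  have len: "length p = m"
    using p by (rule length_paths)
  have "(\<Sum>v\<in>band m k. path_mean mu p v) = mu * card (band m k \<inter> path_vertices p)"
    using finite_subset[OF band_subset finite_lattice_V]
    by (simp add: path_mean_def sum.If_cases Int_def)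
  also have "band m k \<inter> path_vertices p = (\<lambda>i. (int i, p ! i)) ` {i. i < length p \<and> \<bar>p ! i\<bar> \<le> int k}"
    using path_vertices_subset[OF p] len unfolding band_def path_vertices_def by auto
  also have "card \<dots> = time_in_band k p"
    unfolding time_in_band_def by (intro card_image inj_onI) simp
  finally show ?thesis .
qed

lemma P0_band_test_le:
  assumes "0 < mu" "0 < m"
  shows "measure (P0 m) {x \<in> space (P0 m). band_test m mu k x} \<le> card (band m k) / (mu * real m / 4)\<^sup>2"
  using PiM_gauss_sum_deviation[OF finite_lattice_V band_subset,
      where r = "mu * real m / 4" and P = "band_test m mu k" and a = "\<lambda>_. 0"] assms
  by (simp add: P0_def band_test_def)

lemma P1_not_band_test_le:
  assumes p: "p \<in> paths m" and "0 < mu" "0 < m" and in_band: "real m \<le> 2 * time_in_band k p"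
  shows "measure (P1 m mu p) {x \<in> space (P1 m mu p). \<not> band_test m mu k x} \<le> card (band m k) / (mu * real m / 4)\<^sup>2"
proof -
  have "mu * real m / 2 \<le> mu * time_in_band k p"
    using assms by simp
  then have "mu * real m / 4 \<le> \<bar>(\<Sum>v\<in>band m k. x v) - (\<Sum>v\<in>band m k. path_mean mu p v)\<bar>"
    if "\<not> band_test m mu k x" for x
    using that unfolding band_test_def sum_path_mean_band[OF p] by linarith
  moreover have "0 < mu * real m / 4"
    using assms by simp
  ultimately show ?thesis
    unfolding P1_eq_PiM by (intro PiM_gauss_sum_deviation[OF finite_lattice_V band_subset])
qed

text \<open>A path leaves the band \<open>|j| \<le> k\<close> for more than half of its time only if \<open>\<Sum>\<^sub>i p\<^sub>i\<^sup>2 > k\<^sup>2 m / 2\<close>;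
  averaged over paths, \<open>\<Sum>\<^sub>i p\<^sub>i\<^sup>2 \<le> m\<^sup>2\<close>.\<close>

lemma time_outside_band_le:
  assumes len: "length p = m"
  shows "(real m - time_in_band k p) * (real k)\<^sup>2 \<le> (\<Sum>i<m. (real_of_int (p ! i))\<^sup>2)"
proof -
  let ?out = "{i. i < m \<and> \<not> \<bar>p ! i\<bar> \<le> int k}"
  have "card ?out + time_in_band k p = card (?out \<union> {i. i < m \<and> \<bar>p ! i\<bar> \<le> int k})"
    unfolding time_in_band_def len by (rule card_Un_disjoint[symmetric]) auto
  also have "?out \<union> {i. i < m \<and> \<bar>p ! i\<bar> \<le> int k} = {..<m}"
    by auto
  finally have "real m - time_in_band k p = card ?out"
    by simp
  also have "real (card ?out) * (real k)\<^sup>2 = (\<Sum>i\<in>?out. (real k)\<^sup>2)"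
    by simp
  also have "\<dots> \<le> (\<Sum>i\<in>?out. (real_of_int (p ! i))\<^sup>2)"
  proof (rule sum_mono)
    fix i assume "i \<in> ?out"
    then have "real_of_int (int k) \<le> real_of_int \<bar>p ! i\<bar>"
      by (simp only: of_int_le_iff) auto
    then show "(real k)\<^sup>2 \<le> (real_of_int (p ! i))\<^sup>2"
      by (simp flip: abs_le_square_iff)
  qed
  also have "\<dots> \<le> (\<Sum>i<m. (real_of_int (p ! i))\<^sup>2)"
    by (intro sum_mono2) auto
  finally show ?thesis .
qed

lemma card_paths_outside_band_le:
  assumes "0 < k"
  shows "real (card {p \<in> paths (Suc n). 2 * time_in_band k p < Suc n}) * (real k)\<^sup>2 \<le> 2 * real (Suc n) * 2 ^ n"
proof -
  let ?m = "Suc n"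
  let ?B = "{p \<in> paths ?m. 2 * time_in_band k p < ?m}"
  let ?S = "\<lambda>p. \<Sum>i<?m. (real_of_int (p ! i))\<^sup>2"
  have outside: "real ?m * (real k)\<^sup>2 \<le> 2 * ?S p" if p: "p \<in> ?B" for p
  proof -
    have "real ?m * (real k)\<^sup>2 \<le> (2 * (real ?m - time_in_band k p)) * (real k)\<^sup>2"
      using p by (intro mult_right_mono) simp_all
    also have "\<dots> = 2 * ((real ?m - time_in_band k p) * (real k)\<^sup>2)"
      by simp
    also have "\<dots> \<le> 2 * ?S p"
      using time_outside_band_le[of p ?m k] p by (intro mult_left_mono) (simp_all add: length_paths)
    finally show ?thesis .
  qed
  have "real (card ?B) * (real ?m * (real k)\<^sup>2) = (\<Sum>p\<in>?B. real ?m * (real k)\<^sup>2)"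
    by simp
  also have "\<dots> \<le> (\<Sum>p\<in>?B. 2 * ?S p)"
    by (intro sum_mono outside)
  also have "\<dots> \<le> (\<Sum>p\<in>paths ?m. 2 * ?S p)"
    by (intro sum_mono2 finite_paths) (auto intro!: sum_nonneg simp del: sum.lessThan_Suc)
  also have "\<dots> = 2 * (\<Sum>i<?m. \<Sum>p\<in>paths ?m. (real_of_int (p ! i))\<^sup>2)"
    by (subst sum.swap) (simp add: sum_distrib_left)
  also have "\<dots> = 2 * (\<Sum>i<?m. real i * 2 ^ n)"
    by (simp add: sum_paths_nth_sq)
  also have "\<dots> \<le> 2 * (\<Sum>i<?m. real ?m * 2 ^ n)"
    by (intro mult_left_mono sum_mono) auto
  finally have "real (card ?B) * (real k)\<^sup>2 * real ?m \<le> 2 * real ?m * 2 ^ n * real ?m"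
    by (simp add: algebra_simps)
  then show ?thesis
    by (rule mult_right_le_imp_le) simp
qed

lemma bayes_risk_le:
  assumes mu: "0 < mu" and k: "0 < k"
  shows "bayes_risk (Suc n) mu \<le> 32 * (2 * real k + 1) / (mu\<^sup>2 * real (Suc n)) + 2 * real (Suc n) / (real k)\<^sup>2"
proof -
  let ?m = "Suc n" and ?T = "band_test (Suc n) mu k"
  let ?e = "card (band ?m k) / (mu * real ?m / 4)\<^sup>2"
  let ?B = "{p \<in> paths ?m. 2 * time_in_band k p < ?m}"
  have type_II: "measure (P1 ?m mu p) {x \<in> space (P1 ?m mu p). \<not> ?T x} \<le> ?e + of_bool (p \<in> ?B)"
    if p: "p \<in> paths ?m" for p
  proof (cases "p \<in> ?B")
    case True
    then show ?thesis
      using prob_space.prob_le_1[OF prob_space_P1] by (simp add: add_increasing)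
  next
    case False
    then show ?thesis
      using P1_not_band_test_le[OF p mu] p by simp
  qed
  have "bayes_risk ?m mu \<le> bayes_risk_of ?m mu ?T"
    by (rule bayes_risk_le_bayes_risk_of[OF band_test_in_tests])
  also have "\<dots> \<le> ?e + (\<Sum>p\<in>paths ?m. ?e + of_bool (p \<in> ?B)) / 2 ^ n"
    unfolding bayes_risk_of_def using P0_band_test_le[OF mu, of "Suc n" k] type_II
    by (intro add_mono) (simp_all add: card_paths divide_right_mono sum_mono)
  also have "\<dots> = 2 * ?e + card ?B / 2 ^ n"
    using finite_paths[of n] by (simp add: sum.distrib card_paths add_divide_distrib of_bool_def sum.If_cases Int_def)
  also have "\<dots> \<le> 32 * (2 * real k + 1) / (mu\<^sup>2 * real ?m) + 2 * real ?m / (real k)\<^sup>2"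
  proof (rule add_mono)
    have "2 * ?e \<le> 2 * (real ?m * (2 * real k + 1) / (mu * real ?m / 4)\<^sup>2)"
      using of_nat_mono[OF card_band_le[of ?m k], where 'a = real]
      by (intro divide_right_mono mult_left_mono) (simp_all add: algebra_simps)
    also have "\<dots> = 32 * (2 * real k + 1) / (mu\<^sup>2 * real ?m)"
    proof -
      have scale: "2 * (M * c / (mu * M / 4)\<^sup>2) = 32 * c / (mu\<^sup>2 * M)" if "0 < M" for M c :: real
        using that mu by (simp add: power2_eq_square field_simps)
      show ?thesis
        by (rule scale) simp
    qed
    finally show "2 * ?e \<le> 32 * (2 * real k + 1) / (mu\<^sup>2 * real ?m)" .
    show "card ?B / 2 ^ n \<le> 2 * real ?m / (real k)\<^sup>2"
      using card_paths_outside_band_le[OF k, of n] k by (simp add: field_simps)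
  qed
  finally show ?thesis .
qed

section \<open>Asymptotics\<close>

lemma powr_quarter_sq: "0 \<le> x \<Longrightarrow> (x powr (1/4))\<^sup>2 = sqrt x"
  by (simp add: powr_half_sqrt[symmetric] powr_powr flip: powr_realpow')

text \<open>Taking \<open>k \<approx> C \<surd>m\<close> in the band test balances its two error terms.\<close>

lemma bayes_risk_le_powr:
  assumes mu: "0 < mu" and C: "0 < C"
  shows "bayes_risk (Suc n) mu \<le> 32 * (2 * C + 3) / (mu * real (Suc n) powr (1/4))\<^sup>2 + 2 / C\<^sup>2"
proof -
  define s where "s = sqrt (real (Suc n))"
  define k where "k = nat \<lceil>C * s\<rceil>"
  have s: "1 \<le> s" "s * s = real (Suc n)"
    by (simp_all add: s_def)
  have k: "C * s \<le> real k" "real k \<le> C * s + 1"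
    using C s by (simp_all add: k_def)
  moreover have "0 < C * s"
    using C s by simp
  ultimately have "0 < k"
    by simp
  have z: "(mu * real (Suc n) powr (1/4))\<^sup>2 = mu\<^sup>2 * s"
    by (simp add: power_mult_distrib powr_quarter_sq s_def)
  have "2 * real k + 1 \<le> (2 * C + 3) * s"
    using k s by (simp add: algebra_simps)
  then have "32 * (2 * real k + 1) / (mu\<^sup>2 * real (Suc n)) \<le> 32 * ((2 * C + 3) * s) / (mu\<^sup>2 * real (Suc n))"
    by (intro divide_right_mono mult_left_mono) simp_all
  also have "\<dots> = 32 * (2 * C + 3) / (mu\<^sup>2 * s)"
    unfolding s(2)[symmetric] using s(1) mu by (simp add: field_simps)
  also have "\<dots> = 32 * (2 * C + 3) / (mu * real (Suc n) powr (1/4))\<^sup>2"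
    unfolding z ..
  finally have first: "32 * (2 * real k + 1) / (mu\<^sup>2 * real (Suc n)) \<le> 32 * (2 * C + 3) / (mu * real (Suc n) powr (1/4))\<^sup>2" .
  have "(C * s)\<^sup>2 \<le> (real k)\<^sup>2"
    using k C s by (intro power_mono) auto
  then have "C\<^sup>2 * real (Suc n) \<le> (real k)\<^sup>2"
    unfolding s(2)[symmetric] by (simp add: power2_eq_square mult_ac)
  then have "2 * real (Suc n) / (real k)\<^sup>2 \<le> 2 * real (Suc n) / (C\<^sup>2 * real (Suc n))"
    using C \<open>0 < k\<close> by (intro divide_left_mono) simp_all
  then have second: "2 * real (Suc n) / (real k)\<^sup>2 \<le> 2 / C\<^sup>2"
    by (simp del: of_nat_Suc)
  show ?thesis
    using bayes_risk_le[OF mu \<open>0 < k\<close>, of n] first second by linarith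
qed

lemma meet_mgf_sub_one_le:
  assumes small: "(mu * real (Suc n) powr (1/4))\<^sup>2 \<le> 1/8"
  shows "meet_mgf (mu\<^sup>2) n 0 - 1 \<le> 8 * (mu * real (Suc n) powr (1/4))\<^sup>2"
proof -
  define z where "z = mu * real (Suc n) powr (1/4)"
  define a where "a = exp (mu\<^sup>2) - 1"
  define G where "G = expected_visits n 0"
  have z: "z\<^sup>2 = mu\<^sup>2 * sqrt (real (Suc n))"
    by (simp add: z_def power_mult_distrib powr_quarter_sq)
  then have "mu\<^sup>2 \<le> z\<^sup>2"
    by (simp add: mult_le_cancel_left1)
  then have a: "0 \<le> a" "a \<le> 2 * mu\<^sup>2"
    using small real_exp_bound_lemma[of "mu\<^sup>2"] by (simp_all add: a_def z_def)
  have G: "0 \<le> G" "G \<le> 2 * sqrt (real (Suc n))"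
    using expected_visits_nonneg[of n 0] expected_visits_le[of n] by (simp_all add: G_def add.commute)
  have "a * G \<le> (2 * mu\<^sup>2) * (2 * sqrt (real (Suc n)))"
    using a G by (intro mult_mono) auto
  then have aG: "0 \<le> a * G" "a * G \<le> 4 * z\<^sup>2"
    using a G z by simp_all
  then have "a * G \<le> 1/2"
    using small by (simp add: z_def)
  then have "meet_mgf (mu\<^sup>2) n 0 \<le> 1 / (1 - a * G)"
    using meet_mgf_le[of "mu\<^sup>2" n] by (simp add: a_def G_def)
  also have "\<dots> \<le> 1 + 2 * (a * G)"
  proof -
    have "0 \<le> a * G * (1 - 2 * (a * G))"
      using aG \<open>a * G \<le> 1/2\<close> by simp
    then have "1 \<le> (1 + 2 * (a * G)) * (1 - a * G)"
      by (simp add: algebra_simps)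
    then show ?thesis
      using \<open>a * G \<le> 1/2\<close> by (simp add: pos_divide_le_eq)
  qed
  finally show ?thesis
    using aG by (simp add: z_def)
qed

lemma bayes_risk_tendsto_0:
  assumes mu: "\<And>m. 0 < mu m"
    and large: "filterlim (\<lambda>m. mu m * real m powr (1/4)) at_top sequentially"
  shows "(\<lambda>m. bayes_risk m (mu m)) \<longlonglongrightarrow> 0"
proof (rule order_tendstoI)
  fix r :: real
  assume "r < 0"
  then have "r < bayes_risk m (mu m)" for m
    using bayes_risk_nonneg[of m "mu m"] by linarith
  then show "\<forall>\<^sub>F m in sequentially. r < bayes_risk m (mu m)"
    by simp
next
  fix r :: real
  assume r: "0 < r"
  define C where "C = 2 / sqrt r"
  define B where "B = 64 * (2 * C + 3) / r"
  have C: "0 < C" "2 / C\<^sup>2 = r / 2"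
    using r by (simp_all add: C_def power_divide)
  have B: "0 < B"
    using r C by (simp add: B_def)
  have "\<forall>\<^sub>F m in sequentially. sqrt B < mu m * real m powr (1/4) \<and> 1 \<le> m"
    using large by (simp add: filterlim_at_top_dense eventually_conj eventually_ge_at_top)
  then show "\<forall>\<^sub>F m in sequentially. bayes_risk m (mu m) < r"
  proof eventually_elim
    case (elim m)
    then obtain n where m: "m = Suc n"
      by (cases m) auto
    define z where "z = mu m * real m powr (1/4)"
    have "(sqrt B)\<^sup>2 < z\<^sup>2"
      using elim B unfolding z_def by (intro power_strict_mono) auto
    then have "B < z\<^sup>2"
      using B by simp
    then have "64 * (2 * C + 3) < r * z\<^sup>2"
      using r by (simp add: B_def pos_divide_less_eq mult.commute)
    moreover have "0 < z\<^sup>2"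
      using B \<open>B < z\<^sup>2\<close> by linarith
    ultimately have "32 * (2 * C + 3) / z\<^sup>2 < r / 2"
      by (simp add: pos_divide_less_eq)
    then show ?case
      using bayes_risk_le_powr[OF mu[of m] C(1), of n] C(2) unfolding m z_def by linarith
  qed
qed

lemma bayes_risk_tendsto_1:
  assumes "(\<lambda>m. mu m * real m powr (1/4)) \<longlonglongrightarrow> 0"
  shows "(\<lambda>m. bayes_risk m (mu m)) \<longlonglongrightarrow> 1"
proof -
  define z where "z m = mu m * real m powr (1/4)" for m
  have z: "z \<longlonglongrightarrow> 0"
    using assms by (simp add: z_def[abs_def])
  have "\<forall>\<^sub>F m in sequentially. (z m)\<^sup>2 < 1/8"
    using order_tendstoD(2)[OF tendsto_power[OF z, of 2], of "1/8"] by simp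
  moreover have "\<forall>\<^sub>F m in sequentially. 0 < m"
    by (rule eventually_gt_at_top)
  ultimately have lower: "\<forall>\<^sub>F m in sequentially. 1 - sqrt (8 * (z m)\<^sup>2) \<le> bayes_risk m (mu m)"
  proof eventually_elim
    case (elim m)
    then obtain n where m: "m = Suc n"
      by (cases m) auto
    then have "sqrt (meet_mgf ((mu m)\<^sup>2) n 0 - 1) \<le> sqrt (8 * (z m)\<^sup>2)"
      using meet_mgf_sub_one_le[of "mu m" n] elim by (intro real_sqrt_le_mono) (simp add: z_def)
    then show ?case
      using bayes_risk_ge[of "mu m" n] unfolding m by linarith
  qed
  have upper: "\<forall>\<^sub>F m in sequentially. bayes_risk m (mu m) \<le> 1"
    using eventually_gt_at_top[of 0]
  proof eventually_elim
    case (elim m)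
    then show ?case
      using bayes_risk_le_1[of "m - 1"] by simp
  qed
  have "(\<lambda>m. 1 - sqrt (8 * (z m)\<^sup>2)) \<longlonglongrightarrow> 1 - sqrt (8 * 0\<^sup>2)"
    by (intro tendsto_intros z)
  then have "(\<lambda>m. 1 - sqrt (8 * (z m)\<^sup>2)) \<longlonglongrightarrow> 1"
    by simp
  then show ?thesis
    by (rule tendsto_sandwich[OF lower upper _ tendsto_const])
qed

theorem theorem1p2:
  fixes mu :: "nat \<Rightarrow> real"
  assumes "\<And>m. mu m > 0"
  shows "(filterlim (\<lambda>m. mu m * real m powr (1/4)) at_top sequentially
            \<longrightarrow> (\<lambda>m. bayes_risk m (mu m)) \<longlonglongrightarrow> 0)
       \<and> ((\<lambda>m. mu m * real m powr (1/4)) \<longlonglongrightarrow> 0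
            \<longrightarrow> liminf (\<lambda>m. ereal (bayes_risk m (mu m))) \<ge> 1)"
proof (intro conjI impI)
  show "(\<lambda>m. bayes_risk m (mu m)) \<longlonglongrightarrow> 0"
    if "filterlim (\<lambda>m. mu m * real m powr (1/4)) at_top sequentially"
    using bayes_risk_tendsto_0[OF assms that] .
  assume "(\<lambda>m. mu m * real m powr (1/4)) \<longlonglongrightarrow> 0"
  then have "(\<lambda>m. ereal (bayes_risk m (mu m))) \<longlonglongrightarrow> ereal 1"
    by (intro tendsto_ereal bayes_risk_tendsto_1)
  then have "liminf (\<lambda>m. ereal (bayes_risk m (mu m))) = ereal 1"
    by (intro lim_imp_Liminf) simp_all
  then show "liminf (\<lambda>m. ereal (bayes_risk m (mu m))) \<ge> 1"
    by simp
qed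

end
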